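(* For every $n \geq 2$, the set $\{d_{n1}\}$ is equidistributed.
   Context: A linear arrangement of $\{1,\ldots,n\}$ is a sequence $a_1\cdots a_n$ in which each of $1,\ldots,n$ appears exactly once. It contains the pattern $ij$ if $a_t=i$ and $a_{t+1}=j$ for some $t$; otherwise it avoids it. $\{d_{n1}\}$ is the set of linear arrangements of $\{1,\ldots,n\}$ that avoid all of the patterns $12, 23, \ldots, (n-1)n$ and contain the pattern $n1$. For a set $X$ of linear arrangements of $\{1,\ldots,n\}$ and $i\in\{1,\ldots,n\}$, the class $X^{(i)}$ is the set of arrangements in $X$ whose first entry is $i$. $X$ is called equidistributed if it is partitioned into its nonempty classes and all nonempty classes $X^{(i)}$ have the same cardinality. *)

theory Defs
  imports "HOL-Combinatorics.Permutations"
begin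

definition linear_arrangements :: "nat \<Rightarrow> nat list set" where
  "linear_arrangements n = {a. distinct a \<and> set a = {1..n}}"

definition contains_pattern :: "nat list \<Rightarrow> nat \<Rightarrow> nat \<Rightarrow> bool" where
  "contains_pattern a i j \<longleftrightarrow> (\<exists>t. Suc t < length a \<and> a ! t = i \<and> a ! Suc t = j)"

definition d_n1 :: "nat \<Rightarrow> nat list set" where
  "d_n1 n = {a \<in> linear_arrangements n.
              (\<forall>k\<in>{1..<n}. \<not> contains_pattern a k (Suc k)) \<and> contains_pattern a n 1}"

definition arr_class :: "nat list set \<Rightarrow> nat \<Rightarrow> nat list set" where
  "arr_class X i = {a \<in> X. a \<noteq> [] \<and> hd a = i}"

definition equidistributed :: "nat \<Rightarrow> nat list set \<Rightarrow> bool" where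
  "equidistributed n X \<longleftrightarrow>
     (\<forall>i\<in>{1..n}. \<forall>j\<in>{1..n}. arr_class X i \<noteq> {} \<longrightarrow> arr_class X j \<noteq> {} \<longrightarrow>
        card (arr_class X i) = card (arr_class X j))"

end

theory Submission
  imports Defs
begin

text \<open>In every arrangement of \<open>d_n1 n\<close> the entry 1 sits directly after n. Deleting it is a
  bijection onto the arrangements of \<open>{2..n}\<close> that avoid the cyclic successions
  23, 34, ..., (n-1)n, n2 (the forbidden pattern 12 turns into n2), and it preserves first entries.
  That reduced set is invariant under relabelling by the cyclic shift of \<open>{2..n}\<close>, which maps
  the arrangements starting with i bijectively onto those starting with its successor. Hence all
  classes with first entry 2, ..., n have the same size, while no arrangement starts with 1.\<close>

fun adjacent_pairs :: "'a list \<Rightarrow> ('a \<times> 'a) set" where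
  "adjacent_pairs (x # y # zs) = insert (x, y) (adjacent_pairs (y # zs))"
| "adjacent_pairs _ = {}"

lemma contains_pattern_iff_adjacent_pairs:
  "contains_pattern a i j \<longleftrightarrow> (i, j) \<in> adjacent_pairs a"
proof (induction a rule: adjacent_pairs.induct)
  case (1 x y zs)
  have "contains_pattern (x # y # zs) i j \<longleftrightarrow> (i, j) = (x, y) \<or> contains_pattern (y # zs) i j"
    unfolding contains_pattern_def by (auto simp: less_Suc_eq_0_disj)
  with "1.IH" show ?case by simp
qed (auto simp: contains_pattern_def)

lemma adjacent_pairs_subset: "adjacent_pairs xs \<subseteq> set xs \<times> set xs"
  by (induction xs rule: adjacent_pairs.induct) auto

lemma adjacent_pairs_map: "adjacent_pairs (map f xs) = map_prod f f ` adjacent_pairs xs"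
  by (induction xs rule: adjacent_pairs.induct) auto

lemma adjacent_pairs_Cons:
  "adjacent_pairs (x # xs) = adjacent_pairs xs \<union> (if xs = [] then {} else {(x, hd xs)})"
  by (cases xs) auto

lemma adjacent_pairs_append_Cons:
  "adjacent_pairs (xs @ y # ys) =
    adjacent_pairs xs \<union> (if xs = [] then {} else {(last xs, y)}) \<union> adjacent_pairs (y # ys)"
  by (induction xs rule: adjacent_pairs.induct) auto

lemma in_adjacent_pairs_iff: "(x, y) \<in> adjacent_pairs a \<longleftrightarrow> (\<exists>xs ys. a = xs @ x # y # ys)"
proof
  show "(x, y) \<in> adjacent_pairs a \<Longrightarrow> \<exists>xs ys. a = xs @ x # y # ys"
  proof (induction a rule: adjacent_pairs.induct)
    case (1 u v zs)
    show ?case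
    proof (cases "(x, y) = (u, v)")
      case True
      then show ?thesis by auto
    next
      case False
      with "1.prems" obtain xs ys where "v # zs = xs @ x # y # ys"
        using "1.IH" by auto
      then have "u # v # zs = (u # xs) @ x # y # ys" by simp
      then show ?thesis by blast
    qed
  qed auto
  show "\<exists>xs ys. a = xs @ x # y # ys \<Longrightarrow> (x, y) \<in> adjacent_pairs a"
    by (auto simp: adjacent_pairs_append_Cons)
qed

fun insert_after :: "'a \<Rightarrow> 'a \<Rightarrow> 'a list \<Rightarrow> 'a list" where
  "insert_after x z [] = []"
| "insert_after x z (y # ys) = (if y = x then x # z # ys else y # insert_after x z ys)"

lemma insert_after_append_Cons:
  "x \<notin> set xs \<Longrightarrow> insert_after x z (xs @ x # ys) = xs @ x # z # ys"
  by (induction xs) auto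

lemma hd_insert_after: "hd (insert_after x z xs) = hd xs"
  by (cases xs) auto

lemma insert_after_eq_Nil_iff: "insert_after x z xs = [] \<longleftrightarrow> xs = []"
  by (cases xs) auto

lemma arr_class_image_insert_after:
  "arr_class (insert_after x z ` X) i = insert_after x z ` arr_class X i"
  by (auto simp: arr_class_def hd_insert_after insert_after_eq_Nil_iff)

lemma set_insert_after: "x \<in> set xs \<Longrightarrow> set (insert_after x z xs) = insert z (set xs)"
  by (induction xs) auto

lemma set_insert_after_subset: "set (insert_after x z xs) \<subseteq> insert z (set xs)"
  by (induction xs) auto

lemma distinct_insert_after: "distinct xs \<Longrightarrow> z \<notin> set xs \<Longrightarrow> distinct (insert_after x z xs)"
  by (induction xs) (use set_insert_after_subset in fastforce)+

lemma remove1_insert_after: "z \<notin> set xs \<Longrightarrow> remove1 z (insert_after x z xs) = xs"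
  by (induction xs) auto

lemma insert_after_remove1:
  assumes "distinct a" "(x, z) \<in> adjacent_pairs a"
  shows "insert_after x z (remove1 z a) = a"
proof -
  obtain xs ys where a: "a = xs @ x # z # ys"
    using assms(2) in_adjacent_pairs_iff by metis
  with assms(1) show ?thesis
    by (auto simp: remove1_append insert_after_append_Cons)
qed

lemma adjacent_pairs_insert_after:
  assumes "distinct b" "x \<in> set b"
  shows "adjacent_pairs (insert_after x z b) =
    {p \<in> adjacent_pairs b. fst p \<noteq> x} \<union> {(x, z)} \<union> {(z, y) |y. (x, y) \<in> adjacent_pairs b}"
proof -
  obtain xs ys where b: "b = xs @ x # ys" and x: "x \<notin> set xs" "x \<notin> set ys"
    using assms split_list by fastforce
  have "(x, y) \<notin> adjacent_pairs xs \<union> adjacent_pairs ys" for y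
    using x adjacent_pairs_subset by fastforce
  with x show ?thesis
    by (auto simp: b insert_after_append_Cons adjacent_pairs_append_Cons adjacent_pairs_Cons)
qed

definition pattern_avoiding :: "'a set \<Rightarrow> ('a \<times> 'a) set \<Rightarrow> 'a list set" where
  "pattern_avoiding A R = {b. distinct b \<and> set b = A \<and> adjacent_pairs b \<inter> R = {}}"

lemma finite_pattern_avoiding: "finite A \<Longrightarrow> finite (pattern_avoiding A R)"
  by (rule finite_subset[OF _ finite_subset_distinct]) (auto simp: pattern_avoiding_def)

lemma map_in_pattern_avoiding:
  assumes f: "bij_betw f A A"
    and R: "\<And>x y. x \<in> A \<Longrightarrow> y \<in> A \<Longrightarrow> (f x, f y) \<in> R \<Longrightarrow> (x, y) \<in> R"
    and b: "b \<in> pattern_avoiding A R"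
  shows "map f b \<in> pattern_avoiding A R"
proof -
  have "(x, y) \<in> set b \<times> set b" if "(x, y) \<in> adjacent_pairs b" for x y
    using that adjacent_pairs_subset by blast
  with b R have "adjacent_pairs (map f b) \<inter> R = {}"
    by (fastforce simp: adjacent_pairs_map pattern_avoiding_def)
  with f b show ?thesis
    by (auto simp: pattern_avoiding_def distinct_map bij_betw_def)
qed

lemma card_arr_class_pattern_avoiding_symmetric:
  assumes A: "finite A" and f: "bij_betw f A A"
    and R: "\<And>x y. x \<in> A \<Longrightarrow> y \<in> A \<Longrightarrow> (f x, f y) \<in> R \<Longrightarrow> (x, y) \<in> R"
    and i: "i \<in> A"
  shows "card (arr_class (pattern_avoiding A R) (f i)) = card (arr_class (pattern_avoiding A R) i)"
proof -
  let ?P = "pattern_avoiding A R"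
  have inj: "inj_on (map f) ?P"
  proof (rule inj_onI)
    fix b c assume "b \<in> ?P" "c \<in> ?P" "map f b = map f c"
    with f show "b = c"
      using map_inj_on[of f b c] by (auto simp: bij_betw_def pattern_avoiding_def)
  qed
  have into: "map f ` ?P \<subseteq> ?P"
    using map_in_pattern_avoiding[OF f R] by blast
  have onto: "?P \<subseteq> map f ` ?P"
    using endo_inj_surj[OF finite_pattern_avoiding[OF A] into inj] by simp
  have hd_iff: "f (hd b) = f i \<longleftrightarrow> hd b = i" if "b \<in> ?P" "b \<noteq> []" for b
  proof -
    have "hd b \<in> A"
      using that hd_in_set by (auto simp: pattern_avoiding_def)
    with i f show ?thesis
      by (auto simp: bij_betw_def inj_on_eq_iff)
  qed
  have "arr_class ?P (f i) = map f ` arr_class ?P i"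
  proof
    show "map f ` arr_class ?P i \<subseteq> arr_class ?P (f i)"
      using into by (auto simp: arr_class_def hd_map)
    show "arr_class ?P (f i) \<subseteq> map f ` arr_class ?P i"
    proof
      fix c assume c: "c \<in> arr_class ?P (f i)"
      then obtain b where b: "b \<in> ?P" "c = map f b"
        using onto by (auto simp: arr_class_def)
      with c hd_iff[OF b(1)] show "c \<in> map f ` arr_class ?P i"
        by (auto simp: arr_class_def hd_map)
    qed
  qed
  moreover have "inj_on (map f) (arr_class ?P i)"
    using inj by (rule inj_on_subset) (auto simp: arr_class_def)
  ultimately show ?thesis
    by (simp add: card_image)
qed

definition cyclic_succ :: "nat \<Rightarrow> nat \<Rightarrow> nat" where
  "cyclic_succ n k = (if k = n then 2 else Suc k)"

definition cyclic_successions :: "nat \<Rightarrow> (nat \<times> nat) set" where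
  "cyclic_successions n = (\<lambda>k. (k, cyclic_succ n k)) ` {2..n}"

abbreviation cyclic_succession_free :: "nat \<Rightarrow> nat list set" where
  "cyclic_succession_free n \<equiv> pattern_avoiding {2..n} (cyclic_successions n)"

lemma bij_betw_cyclic_succ:
  assumes "n \<ge> 2"
  shows "bij_betw (cyclic_succ n) {2..n} {2..n}"
proof (rule bij_betw_imageI)
  show "inj_on (cyclic_succ n) {2..n}"
    by (auto simp: inj_on_def cyclic_succ_def split: if_splits)
  have "x \<in> cyclic_succ n ` {2..n}" if "x \<in> {2..n}" for x
  proof (cases "x = 2")
    case True
    with assms show ?thesis by (auto simp: cyclic_succ_def image_iff intro: bexI[of _ n])
  next
    case False
    with that have "x = cyclic_succ n (x - 1)" "x - 1 \<in> {2..n}"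
      by (auto simp: cyclic_succ_def)
    then show ?thesis by blast
  qed
  moreover have "cyclic_succ n ` {2..n} \<subseteq> {2..n}"
    using assms by (auto simp: cyclic_succ_def)
  ultimately show "cyclic_succ n ` {2..n} = {2..n}"
    by blast
qed

lemma card_arr_class_cyclic_succession_free:
  assumes n: "n \<ge> 2" and i: "i \<in> {2..n}"
  shows "card (arr_class (cyclic_succession_free n) i) =
    card (arr_class (cyclic_succession_free n) 2)"
proof -
  have invariant: "(x, y) \<in> cyclic_successions n"
    if "x \<in> {2..n}" "y \<in> {2..n}"
      and "(cyclic_succ n x, cyclic_succ n y) \<in> cyclic_successions n" for x y
    using that bij_betw_cyclic_succ[OF n]
    by (auto simp: cyclic_successions_def bij_betw_def dest: inj_onD)
  have "2 \<le> i" "i \<le> n" using i by auto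
  then show ?thesis
  proof (induction i rule: dec_induct)
    case (step k)
    then have "cyclic_succ n k = Suc k" by (simp add: cyclic_succ_def)
    with step card_arr_class_pattern_avoiding_symmetric[OF _ bij_betw_cyclic_succ[OF n] invariant, of k]
    show ?case by simp
  qed simp
qed

lemma succession_free_insert_after_iff:
  assumes n: "n \<ge> 2" and b: "distinct b" "set b = {2..n}"
  shows "(\<forall>k\<in>{1..<n}. (k, Suc k) \<notin> adjacent_pairs (insert_after n 1 b)) \<longleftrightarrow>
    adjacent_pairs b \<inter> cyclic_successions n = {}"
proof -
  have "(1, y) \<notin> adjacent_pairs b" for y
    using adjacent_pairs_subset b by fastforce
  with n b have pointwise: "(k, Suc k) \<in> adjacent_pairs (insert_after n 1 b) \<longleftrightarrow>
      (if k = 1 then (n, cyclic_succ n n) else (k, cyclic_succ n k)) \<in> adjacent_pairs b"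
    if "k \<in> {1..<n}" for k
    using that by (auto simp: adjacent_pairs_insert_after cyclic_succ_def numeral_2_eq_2)
  have "(\<forall>k\<in>{1..<n}. (k, Suc k) \<notin> adjacent_pairs (insert_after n 1 b)) \<longleftrightarrow>
      (\<forall>k\<in>{2..n}. (k, cyclic_succ n k) \<notin> adjacent_pairs b)"
  proof (intro iffI ballI)
    fix k assume "\<forall>k\<in>{1..<n}. (k, Suc k) \<notin> adjacent_pairs (insert_after n 1 b)" "k \<in> {2..n}"
    then show "(k, cyclic_succ n k) \<notin> adjacent_pairs b"
      using pointwise[of "if k = n then 1 else k"] n by (cases "k = n") auto
  next
    fix k assume "\<forall>k\<in>{2..n}. (k, cyclic_succ n k) \<notin> adjacent_pairs b" "k \<in> {1..<n}"
    then show "(k, Suc k) \<notin> adjacent_pairs (insert_after n 1 b)"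
      using pointwise[of k] n by (cases "k = 1") auto
  qed
  then show ?thesis
    by (auto simp: cyclic_successions_def)
qed

lemma d_n1_eq_image_insert_after:
  assumes n: "n \<ge> 2"
  shows "d_n1 n = insert_after n 1 ` cyclic_succession_free n"
proof (intro equalityI subsetI)
  fix a assume "a \<in> d_n1 n"
  then have a: "distinct a" "set a = {1..n}" "(n, 1) \<in> adjacent_pairs a"
    and free: "\<forall>k\<in>{1..<n}. (k, Suc k) \<notin> adjacent_pairs a"
    by (auto simp: d_n1_def linear_arrangements_def contains_pattern_iff_adjacent_pairs)
  have "set (remove1 1 a) = {1..n} - {1}"
    using a by (simp add: set_remove1_eq)
  also have "\<dots> = {2..n}"
    by auto
  finally have b: "distinct (remove1 1 a)" "set (remove1 1 a) = {2..n}"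
    using a by simp_all
  have a_eq: "insert_after n 1 (remove1 1 a) = a"
    using a(1,3) by (rule insert_after_remove1)
  have "adjacent_pairs (remove1 1 a) \<inter> cyclic_successions n = {}"
    using succession_free_insert_after_iff[OF n b] free unfolding a_eq by blast
  then have "remove1 1 a \<in> cyclic_succession_free n"
    using b by (simp add: pattern_avoiding_def)
  with a_eq[symmetric] show "a \<in> insert_after n 1 ` cyclic_succession_free n"
    by blast
next
  fix a assume "a \<in> insert_after n 1 ` cyclic_succession_free n"
  then obtain b where a: "a = insert_after n 1 b"
    and b: "distinct b" "set b = {2..n}" "adjacent_pairs b \<inter> cyclic_successions n = {}"
    by (auto simp: pattern_avoiding_def)
  have b_n: "n \<in> set b" and b_1: "1 \<notin> set b"
    using n b by auto
  have "distinct a"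
    using a b(1) b_1 by (simp add: distinct_insert_after)
  moreover have "set a = {1..n}"
    using a b(2) b_n n by (auto simp: set_insert_after)
  moreover have "(n, 1) \<in> adjacent_pairs a"
    using a b(1) b_n by (simp add: adjacent_pairs_insert_after)
  moreover have "\<forall>k\<in>{1..<n}. (k, Suc k) \<notin> adjacent_pairs a"
    using a b succession_free_insert_after_iff[OF n b(1,2)] by simp
  ultimately show "a \<in> d_n1 n"
    by (simp add: d_n1_def linear_arrangements_def contains_pattern_iff_adjacent_pairs)
qed

theorem proposition4p9:
  fixes n :: nat
  assumes "n \<ge> 2"
  shows "equidistributed n (d_n1 n)"
proof -
  have classes:
    "arr_class (d_n1 n) i = insert_after n 1 ` arr_class (cyclic_succession_free n) i" for i
    by (simp add: d_n1_eq_image_insert_after[OF assms] arr_class_image_insert_after)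
  have "inj_on (insert_after n 1) (cyclic_succession_free n)"
    by (rule inj_on_inverseI[of _ "remove1 1"])
      (auto simp: pattern_avoiding_def remove1_insert_after)
  then have card_class:
    "card (arr_class (d_n1 n) i) = card (arr_class (cyclic_succession_free n) i)" for i
    unfolding classes by (rule card_image[OF inj_on_subset]) (simp add: arr_class_def)
  have "arr_class (cyclic_succession_free n) 1 = {}"
    by (auto simp: arr_class_def pattern_avoiding_def dest!: hd_in_set)
  then have nonempty_class: "i \<in> {2..n}" if "i \<in> {1..n}" "arr_class (d_n1 n) i \<noteq> {}" for i
    using that classes[of 1] by (cases "i = 1") auto
  show ?thesis
    unfolding equidistributed_def
  proof (intro ballI impI)
    fix i j assume "i \<in> {1..n}" "j \<in> {1..n}"
      and "arr_class (d_n1 n) i \<noteq> {}" "arr_class (d_n1 n) j \<noteq> {}"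
    then have "i \<in> {2..n}" "j \<in> {2..n}"
      using nonempty_class by blast+
    then show "card (arr_class (d_n1 n) i) = card (arr_class (d_n1 n) j)"
      using card_arr_class_cyclic_succession_free[OF assms, of i]
        card_arr_class_cyclic_succession_free[OF assms, of j]
      by (simp add: card_class)
  qed
qed

end
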